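(* Let $f\in\mathbb{Z}[X]$ have degree $n\ge1$ and let $g\in\mathbb{Q}[X]$ be a nonzero divisor of $f$ in $\mathbb{Q}[X]$. Then $\Phi(g):=fg'/g$ lies in $\mathbb{Z}[X]$, has degree less than $n$, and $$\|\Phi(g)\|\le B(f):=2^{n-1}\,n\,\|f\|.$$
   Context: $\|\cdot\|$ denotes the $L^2$ norm of the coefficient vector of a polynomial. *)

theory Defs
  imports Complex_Main "HOL-Computational_Algebra.Polynomial"
begin

definition poly_l2_norm :: "int poly \<Rightarrow> real" where
  "poly_l2_norm p = sqrt (\<Sum>i\<le>degree p. (real_of_int (coeff p i))\<^sup>2)"

definition Phi :: "int poly \<Rightarrow> rat poly \<Rightarrow> rat poly" where
  "Phi f g = (map_poly rat_of_int f * pderiv g) div g"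

end

theory Submission
  imports Defs "HOL-Analysis.L2_Norm" "Berlekamp_Zassenhaus.Factor_Bound"
begin

text \<open>
  By Gauss's lemma a rational divisor g of f is, up to a nonzero scalar, a primitive integer
  polynomial p with f = p q over the integers, and then \<open>\<Phi>(g) = q p'\<close>. Its norm is estimated
  through the l1 norm, which is submultiplicative: Mignotte's coefficient bound gives
  \<open>\<parallel>q\<parallel>\<^sub>1 \<le> 2\<^bsup>deg q\<^esup> M(q)\<close> and \<open>\<parallel>p'\<parallel>\<^sub>1 \<le> deg p 2\<^bsup>deg p - 1\<^esup> M(p)\<close>, so multiplicativity
  of the Mahler measure M and Landau's inequality \<open>M(f) \<le> \<parallel>f\<parallel>\<close> finish the estimate.
\<close>

definition poly_l1_norm :: "int poly \<Rightarrow> real" where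
  "poly_l1_norm p = (\<Sum>i\<le>degree p. real_of_int \<bar>Polynomial.coeff p i\<bar>)"

lemma poly_l1_norm_eq_sum_lessThan:
  assumes "degree p < m"
  shows "poly_l1_norm p = (\<Sum>i<m. real_of_int \<bar>Polynomial.coeff p i\<bar>)"
proof -
  have "{..<m} = {..degree p} \<union> {degree p<..<m}" using assms by auto
  moreover have "(\<Sum>i\<in>{degree p<..<m}. real_of_int \<bar>Polynomial.coeff p i\<bar>) = 0"
    by (rule sum.neutral) (auto simp: coeff_eq_0)
  ultimately show ?thesis
    unfolding poly_l1_norm_def by (simp add: sum.union_disjoint ivl_disj_int)
qed

lemma poly_l1_norm_nonneg: "poly_l1_norm p \<ge> 0"
  unfolding poly_l1_norm_def by (intro sum_nonneg) auto

lemma poly_l1_norm_0 [simp]: "poly_l1_norm 0 = 0"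
  by (simp add: poly_l1_norm_def)

lemma poly_l1_norm_add_le: "poly_l1_norm (p + q) \<le> poly_l1_norm p + poly_l1_norm q"
proof -
  define m where "m = Suc (max (degree p) (degree q))"
  have "degree (p + q) < m" using degree_add_le_max[of p q] unfolding m_def by auto
  then have "poly_l1_norm (p + q) =
      (\<Sum>i<m. real_of_int \<bar>Polynomial.coeff p i + Polynomial.coeff q i\<bar>)"
    by (simp add: poly_l1_norm_eq_sum_lessThan)
  also have "\<dots> \<le>
      (\<Sum>i<m. real_of_int \<bar>Polynomial.coeff p i\<bar> + real_of_int \<bar>Polynomial.coeff q i\<bar>)"
    by (intro sum_mono) (simp add: abs_triangle_ineq flip: of_int_add)
  also have "\<dots> = poly_l1_norm p + poly_l1_norm q"
    by (simp only: sum.distrib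
        poly_l1_norm_eq_sum_lessThan[of p m] poly_l1_norm_eq_sum_lessThan[of q m]
        m_def less_Suc_eq_le max.cobounded1 max.cobounded2)
  finally show ?thesis .
qed

lemma poly_l1_norm_smult: "poly_l1_norm (Polynomial.smult a p) = \<bar>real_of_int a\<bar> * poly_l1_norm p"
proof -
  have "degree (Polynomial.smult a p) < Suc (degree p)" by (simp add: le_imp_less_Suc)
  then show ?thesis
    by (simp add: poly_l1_norm_eq_sum_lessThan poly_l1_norm_def sum_distrib_left abs_mult
        lessThan_Suc_atMost)
qed

lemma poly_l1_norm_pCons: "poly_l1_norm (pCons a p) = real_of_int \<bar>a\<bar> + poly_l1_norm p"
proof -
  have "degree (pCons a p) < Suc (Suc (degree p))"
    by (simp add: degree_pCons_le le_imp_less_Suc)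
  then have "poly_l1_norm (pCons a p) =
      (\<Sum>i<Suc (Suc (degree p)). real_of_int \<bar>Polynomial.coeff (pCons a p) i\<bar>)"
    by (rule poly_l1_norm_eq_sum_lessThan)
  also have "\<dots> = real_of_int \<bar>a\<bar> + (\<Sum>i<Suc (degree p). real_of_int \<bar>Polynomial.coeff p i\<bar>)"
    by (subst sum.lessThan_Suc_shift) simp
  finally show ?thesis by (simp add: poly_l1_norm_def lessThan_Suc_atMost)
qed

lemma poly_l1_norm_mult_le: "poly_l1_norm (p * q) \<le> poly_l1_norm p * poly_l1_norm q"
proof (induction p)
  case (pCons a p)
  have "poly_l1_norm (pCons a p * q) = poly_l1_norm (Polynomial.smult a q + pCons 0 (p * q))"
    by simp
  also have "\<dots> \<le> poly_l1_norm (Polynomial.smult a q) + poly_l1_norm (pCons 0 (p * q))"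
    by (rule poly_l1_norm_add_le)
  also have "\<dots> = \<bar>real_of_int a\<bar> * poly_l1_norm q + poly_l1_norm (p * q)"
    by (simp add: poly_l1_norm_smult poly_l1_norm_pCons)
  also have "\<dots> \<le> \<bar>real_of_int a\<bar> * poly_l1_norm q + poly_l1_norm p * poly_l1_norm q"
    using pCons.IH by simp
  also have "\<dots> = poly_l1_norm (pCons a p) * poly_l1_norm q"
    by (simp add: poly_l1_norm_pCons algebra_simps)
  finally show ?case .
qed simp

lemma poly_l2_norm_0 [simp]: "poly_l2_norm 0 = 0"
  by (simp add: poly_l2_norm_def)

lemma poly_l2_norm_nonneg: "poly_l2_norm p \<ge> 0"
  unfolding poly_l2_norm_def by (intro real_sqrt_ge_zero sum_nonneg) auto

lemma poly_l2_norm_le_l1_norm: "poly_l2_norm p \<le> poly_l1_norm p"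
  using L2_set_le_sum_abs[of "\<lambda>i. real_of_int (Polynomial.coeff p i)" "{..degree p}"]
  by (simp add: poly_l2_norm_def poly_l1_norm_def L2_set_def)

lemma mahler_measure_le_poly_l2_norm: "mahler_measure p \<le> poly_l2_norm p"
proof (cases "p = 0")
  case True
  then show ?thesis by (simp add: mahler_measure_def)
next
  case False
  then have "(\<Sum>a\<leftarrow>coeffs p. a * a) = (\<Sum>i\<le>degree p. (Polynomial.coeff p i)\<^sup>2)"
    by (simp add: coeffs_def interv_sum_list_conv_sum_set_nat power2_eq_square
        atLeast0LessThan flip: lessThan_Suc_atMost)
  then show ?thesis
    using Landau_inequality_mahler_measure[of p] by (simp add: poly_l2_norm_def)
qed

lemma mahler_measure_mult: "mahler_measure (p * q) = mahler_measure p * mahler_measure q"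
  unfolding mahler_measure_def by (simp add: hom_distribs measure_eq_prod)

lemma poly_l1_norm_le_mahler_measure: "poly_l1_norm p \<le> 2 ^ degree p * mahler_measure p"
proof -
  have "poly_l1_norm p \<le> (\<Sum>i\<le>degree p. real (degree p choose i) * mahler_measure p)"
    unfolding poly_l1_norm_def by (intro sum_mono Mignotte_bound)
  also have "\<dots> = 2 ^ degree p * mahler_measure p"
    by (simp flip: sum_distrib_right of_nat_sum choose_row_sum)
  finally show ?thesis .
qed

lemma poly_l1_norm_pderiv_le_mahler_measure:
  "poly_l1_norm (pderiv p) \<le> real (degree p) * 2 ^ (degree p - 1) * mahler_measure p"
proof (cases "degree p")
  case 0
  then have "pderiv p = 0" by (simp add: pderiv_eq_0_iff)
  with 0 show ?thesis by simp
next
  case (Suc d)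
  have coeff_bound: "real (Suc i) * real_of_int \<bar>Polynomial.coeff p (Suc i)\<bar>
      \<le> real (Suc d) * real (d choose i) * mahler_measure p" for i
  proof -
    have "real (Suc i) * real_of_int \<bar>Polynomial.coeff p (Suc i)\<bar>
        \<le> real (Suc i) * (real (Suc d choose Suc i) * mahler_measure p)"
      using Mignotte_bound[of p "Suc i"] Suc by (intro mult_left_mono) simp_all
    also have "\<dots> = real (Suc d) * real (d choose i) * mahler_measure p"
      by (metis Suc_times_binomial mult.assoc of_nat_mult)
    finally show ?thesis .
  qed
  have "degree (pderiv p) < Suc d" using degree_pderiv[of p] Suc by simp
  then have "poly_l1_norm (pderiv p) = (\<Sum>i<Suc d. real_of_int \<bar>Polynomial.coeff (pderiv p) i\<bar>)"
    by (rule poly_l1_norm_eq_sum_lessThan)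
  also have "\<dots> = (\<Sum>i\<le>d. real (Suc i) * real_of_int \<bar>Polynomial.coeff p (Suc i)\<bar>)"
    by (simp add: coeff_pderiv abs_mult lessThan_Suc_atMost)
  also have "\<dots> \<le> (\<Sum>i\<le>d. real (Suc d) * real (d choose i) * mahler_measure p)"
    by (intro sum_mono coeff_bound)
  also have "\<dots> = real (Suc d) * 2 ^ d * mahler_measure p"
    by (simp add: mult.assoc flip: sum_distrib_left sum_distrib_right of_nat_sum choose_row_sum)
  finally show ?thesis by (simp add: Suc)
qed

lemma poly_l2_norm_mult_pderiv_le:
  fixes p q :: "int poly"
  shows "poly_l2_norm (q * pderiv p)
    \<le> 2 ^ (degree (p * q) - 1) * real (degree p) * poly_l2_norm (p * q)"
proof (cases "pderiv p = 0 \<or> q = 0")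
  case True
  then show ?thesis by (auto intro!: mult_nonneg_nonneg poly_l2_norm_nonneg)
next
  case False
  then have "p \<noteq> 0" "q \<noteq> 0" "degree p \<ge> 1" by (auto simp: pderiv_eq_0_iff)
  then have exponents: "(2::real) ^ degree q * 2 ^ (degree p - 1) = 2 ^ (degree (p * q) - 1)"
    by (simp add: degree_mult_eq flip: power_add)
  have "poly_l2_norm (q * pderiv p) \<le> poly_l1_norm q * poly_l1_norm (pderiv p)"
    using poly_l2_norm_le_l1_norm poly_l1_norm_mult_le by (rule order_trans)
  also have "\<dots> \<le> (2 ^ degree q * mahler_measure q)
      * (real (degree p) * 2 ^ (degree p - 1) * mahler_measure p)"
    by (intro mult_mono poly_l1_norm_le_mahler_measure poly_l1_norm_pderiv_le_mahler_measure
        poly_l1_norm_nonneg) (simp add: mahler_measure_ge_0)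
  also have "\<dots> = 2 ^ (degree (p * q) - 1) * real (degree p) * mahler_measure (p * q)"
    unfolding mahler_measure_mult exponents[symmetric] by (simp only: ac_simps)
  also have "\<dots> \<le> 2 ^ (degree (p * q) - 1) * real (degree p) * poly_l2_norm (p * q)"
    by (intro mult_left_mono mahler_measure_le_poly_l2_norm) simp
  finally show ?thesis .
qed

lemma degree_mult_pderiv_less:
  fixes p q :: "'a::{idom, ring_char_0} poly"
  assumes "degree (p * q) \<noteq> 0"
  shows "degree (q * pderiv p) < degree (p * q)"
proof (cases "pderiv p = 0")
  case True
  with assms show ?thesis by simp
next
  case False
  with assms have "p \<noteq> 0" "q \<noteq> 0" "degree p \<noteq> 0" by (auto simp: pderiv_eq_0_iff)
  have "degree (q * pderiv p) \<le> degree q + degree (pderiv p)"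
    by (rule degree_mult_le)
  also have "\<dots> < degree (p * q)"
    using \<open>p \<noteq> 0\<close> \<open>q \<noteq> 0\<close> \<open>degree p \<noteq> 0\<close>
    by (simp add: degree_pderiv degree_mult_eq)
  finally show ?thesis .
qed

lemma rat_poly_dvd_of_int_poly_imp_int_factor:
  fixes f :: "int poly" and g :: "rat poly"
  assumes "g dvd map_poly rat_of_int f"
  obtains c p q where "g = Polynomial.smult c (map_poly rat_of_int p)" and "f = p * q"
proof -
  from assms obtain h where "map_poly rat_of_int f = g * h" by (elim dvdE)
  moreover obtain c p where normalized: "rat_to_normalized_int_poly g = (c, p)" by force
  ultimately obtain r where "f = p * Polynomial.smult (content f) r"
    using rat_to_int_factor_explicit by blast
  then show ?thesis
    using that rat_to_normalized_int_poly(1)[OF normalized] by blast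
qed

lemma Phi_smult_of_int_poly_factor:
  assumes "c \<noteq> 0" and "p \<noteq> 0"
  shows "Phi (p * q) (Polynomial.smult c (map_poly rat_of_int p)) =
    map_poly rat_of_int (q * pderiv p)"
proof -
  let ?g = "Polynomial.smult c (map_poly rat_of_int p)"
  have "map_poly rat_of_int (p * q) * pderiv ?g = ?g * map_poly rat_of_int (q * pderiv p)"
    by (simp add: hom_distribs of_int_hom.map_poly_pderiv pderiv_smult ac_simps)
  moreover have "?g \<noteq> 0" using assms by simp
  ultimately show ?thesis
    unfolding Phi_def by (metis nonzero_mult_div_cancel_left)
qed

theorem corollary4p2:
  fixes f :: "int poly" and g :: "rat poly" and n :: nat
  assumes "degree f = n" and "n \<ge> 1"
    and "g \<noteq> 0" and "g dvd map_poly rat_of_int f"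
  shows "\<exists>h :: int poly. map_poly rat_of_int h = Phi f g \<and> degree h < n \<and>
           poly_l2_norm h \<le> 2 ^ (n - 1) * real n * poly_l2_norm f"
proof -
  obtain c p q where g: "g = Polynomial.smult c (map_poly rat_of_int p)" and f: "f = p * q"
    using assms(4) by (rule rat_poly_dvd_of_int_poly_imp_int_factor)
  have "c \<noteq> 0" "p \<noteq> 0" "f \<noteq> 0" using assms(1-3) g by auto
  then have "Phi f g = map_poly rat_of_int (q * pderiv p)"
    using f g Phi_smult_of_int_poly_factor by blast
  moreover have "degree (q * pderiv p) < n"
    using degree_mult_pderiv_less[of p q] assms(1,2) f by simp
  moreover have "poly_l2_norm (q * pderiv p) \<le> 2 ^ (n - 1) * real n * poly_l2_norm f"
  proof -
    have "degree p \<le> n" using \<open>f \<noteq> 0\<close> assms(1) f by (metis dvd_imp_degree_le dvd_triv_left)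
    have "poly_l2_norm (q * pderiv p) \<le> 2 ^ (n - 1) * real (degree p) * poly_l2_norm f"
      using poly_l2_norm_mult_pderiv_le[of q p] assms(1) f by simp
    also have "\<dots> \<le> 2 ^ (n - 1) * real n * poly_l2_norm f"
      using \<open>degree p \<le> n\<close> by (intro mult_right_mono mult_left_mono poly_l2_norm_nonneg) simp_all
    finally show ?thesis .
  qed
  ultimately show ?thesis by (intro exI[of _ "q * pderiv p"]) simp
qed

end
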